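(* Let $p$ be an odd prime. For every integer $0<s<p-1$, the polynomial $b_{1,s}(\alpha)\in\mathbb F_p[\alpha]$ satisfies \[ b_{1,s}(\alpha)\cdot b_{1,s}(-\alpha)=1-\alpha^{p-1}. \] In particular, $b_{1,s}(\alpha)$ has degree $(p-1)/2$ and factorizes into a product of distinct linear factors in $\mathbb F_p[\alpha]$.
   Context: $\mathbb F_p$ is the field of $p$ elements, $\alpha$ an indeterminate, $\binom{x}{m}=x(x-1)\cdots(x-m+1)/m!$. For integers $0<r,s<p$ (interpreted as elements of $\mathbb F_p$), $b_{r,s}(\alpha)=\sum_{k=0}^{p-1}(-r/s)^k\binom{r\alpha-1}{p-1-k}\binom{s\alpha-1}{k}\in\mathbb F_p[\alpha]$. *)

theory Defs
  imports "Berlekamp_Zassenhaus.Finite_Field" "HOL-Computational_Algebra.Polynomial"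
begin

definition pbinom :: "'a::field poly \<Rightarrow> nat \<Rightarrow> 'a poly" where
  "pbinom x m = smult (inverse (of_nat (fact m))) (\<Prod>i<m. x - [:of_nat i:])"

definition bpoly :: "nat \<Rightarrow> nat \<Rightarrow> 'p::prime_card mod_ring poly" where
  "bpoly r s = (let p = CARD('p); rr = (of_nat r :: 'p mod_ring); ss = of_nat s in
     (\<Sum>k<p. smult ((- (rr / ss)) ^ k)
        (pbinom (smult rr [:0,1:] - 1) (p - 1 - k) * pbinom (smult ss [:0,1:] - 1) k)))"

end

theory Submission
  imports Defs
begin

(* Let t = -1/s. If alpha - 1 and s alpha - 1 are represented by naturals M, N < p, the
   generalised binomials in b_{1,s}(alpha) become ordinary ones, so b_{1,s}(alpha) is the
   coefficient of x^(p-1) in (1 + t x)^N (1 + x)^M. Hence b_{1,s}(alpha) = 0 whenever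
   M + N < p - 1, which happens at alpha or at -alpha for every alpha /= 0. Moreover, with
   D = (1 + x)(1 + t x)^s - 1 = O(x^2) that product is (1 + D)^M (1 + t x)^(s-1), which
   writes b_{1,s} as a combination of binom(alpha - 1, m) with 2m <= p - 1, so
   deg b_{1,s} <= (p-1)/2. Thus b_{1,s} has exactly (p-1)/2 distinct roots, one in each
   pair {alpha, -alpha}, and as b_{1,s}(0) = 1 the polynomials b_{1,s}(alpha) b_{1,s}(-alpha)
   and 1 - alpha^(p-1) agree on all of F_p. *)

lemma prod_of_nat_minus_eq_fact_binomial:
  "(\<Prod>i<m. of_nat N - of_nat i :: 'a::comm_ring_1) = of_nat (fact m * (N choose m))"
proof (induction m)
  case (Suc m)
  have "Suc m * (N choose Suc m) = (N - m) * (N choose m)"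
    by (simp only: binomial_absorption binomial_absorb_comp)
  then have "fact (Suc m) * (N choose Suc m) = fact m * (N choose m) * (N - m)"
    by (metis fact_Suc of_nat_id mult.assoc mult.commute)
  moreover have "of_nat (fact m * (N choose m) * (N - m))
      = of_nat (fact m * (N choose m)) * (of_nat N - of_nat m :: 'a)"
    by (cases "m \<le> N") (simp_all add: of_nat_diff binomial_eq_0)
  ultimately show ?case
    using Suc.IH by simp
qed simp

lemma prod_minus_one_minus_of_nat:
  "(\<Prod>i<m. - 1 - of_nat i :: 'a::comm_ring_1) = (- 1) ^ m * of_nat (fact m)"
  by (induction m) (auto simp: algebra_simps)

lemma poly_pbinom_of_nat:
  fixes y :: "'a::field poly"
  assumes "of_nat (fact m) \<noteq> (0 :: 'a)" and "poly y v = of_nat N"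
  shows "poly (pbinom y m) v = of_nat (N choose m)"
  using assms by (simp add: pbinom_def poly_prod prod_of_nat_minus_eq_fact_binomial)

lemma poly_pbinom_minus_one:
  fixes y :: "'a::field poly"
  assumes "of_nat (fact m) \<noteq> (0 :: 'a)" and "poly y v = - 1"
  shows "poly (pbinom y m) v = (- 1) ^ m"
  using assms by (simp add: pbinom_def poly_prod prod_minus_one_minus_of_nat)

lemma degree_pbinom_le:
  assumes "degree y \<le> 1"
  shows "degree (pbinom y m) \<le> m"
proof -
  have "degree (\<Prod>i<m. y - [:of_nat i:]) \<le> (\<Sum>i<m. degree (y - [:of_nat i:]))"
    using degree_prod_sum_le[of "{..<m}" "\<lambda>i. y - [:of_nat i:]"] by (simp add: o_def)
  also have "\<dots> \<le> (\<Sum>i<m. 1)"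
    by (intro sum_mono degree_diff_le) (use assms in auto)
  finally show ?thesis
    unfolding pbinom_def using degree_smult_le order_trans by fastforce
qed

lemma coeff_linear_power_binomial:
  "coeff ([:1, c:] ^ n) i = of_nat (n choose i) * c ^ i"
proof (induction n arbitrary: i)
  case (Suc n)
  have "[:1, c:] ^ Suc n = [:1, c:] ^ n + pCons 0 (smult c ([:1, c:] ^ n))"
    by (simp add: mult_pCons_left)
  then show ?case
    by (cases i) (simp_all add: Suc.IH algebra_simps)
qed (cases i; simp add: binomial_eq_0)

lemma coeff_power_mult_eq_0:
  assumes "\<forall>i<k. coeff q i = 0" and "j < k * m"
  shows "coeff (q ^ m * r) j = 0"
  using assms(2)
proof (induction m arbitrary: j)
  case (Suc m)
  have "coeff q i * coeff (q ^ m * r) (j - i) = 0" if "i \<le> j" for i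
    using assms(1) Suc that by (cases "i < k") auto
  then show ?case
    by (simp add: coeff_mult mult.assoc)
qed simp

lemma poly_eq_smult_prod_roots:
  fixes q :: "'a::field poly"
  assumes "finite A" and "\<forall>a\<in>A. poly q a = 0" and "card A = degree q" and "q \<noteq> 0"
  shows "q = smult (lead_coeff q) (\<Prod>a\<in>A. [:- a, 1:])"
  using assms
proof (induction A arbitrary: q rule: finite_induct)
  case empty
  then show ?case
    by (metis card.empty degree_0_id prod.empty smult_one)
next
  case (insert a A)
  have "[:- a, 1:] dvd q"
    using insert.prems by (simp add: poly_eq_0_iff_dvd)
  then obtain r where r: "q = [:- a, 1:] * r"
    by (elim dvdE)
  with insert.prems have "r \<noteq> 0"
    by auto
  with r have "degree q = Suc (degree r)"
    by (simp add: degree_mult_eq del: mult_pCons_left)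
  have r_eq: "r = smult (lead_coeff r) (\<Prod>a\<in>A. [:- a, 1:])"
  proof (rule insert.IH)
    show "\<forall>x\<in>A. poly r x = 0"
      using insert.prems insert.hyps r by auto
    show "card A = degree r"
      using insert \<open>degree q = Suc (degree r)\<close> by simp
  qed fact
  have "lead_coeff q = lead_coeff r"
    using r by (simp add: lead_coeff_mult del: mult_pCons_left)
  moreover have "q = smult (lead_coeff r) ([:- a, 1:] * (\<Prod>a\<in>A. [:- a, 1:]))"
    using r r_eq mult_smult_right by metis
  ultimately show ?case
    by (simp only: prod.insert[OF insert.hyps])
qed

lemma finite_field_power_card_minus_one:
  fixes x :: "'a::finite_field"
  assumes "x \<noteq> 0"
  shows "x ^ (CARD('a) - 1) = 1"
proof -
  have "x * x ^ (CARD('a) - 1) = x * 1"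
    using finite_field_power_card_eq_same[of x] finite_UNIV_card_ge_0[where 'a='a]
    by (simp flip: power_Suc)
  with assms show ?thesis
    by (metis mult_left_cancel)
qed

lemma card_roots_ge_if_root_or_root_neg:
  fixes q :: "'a::finite_field poly"
  assumes "\<And>x. x \<noteq> 0 \<Longrightarrow> poly q x = 0 \<or> poly q (- x) = 0"
  shows "CARD('a) - 1 \<le> 2 * card {x. poly q x = 0}"
proof -
  let ?R = "{x. poly q x = 0}"
  have "UNIV - {0} \<subseteq> ?R \<union> uminus ` ?R"
    using assms by (auto simp: image_iff) (metis minus_minus)
  then have "card (UNIV - {0 :: 'a}) \<le> card (?R \<union> uminus ` ?R)"
    by (intro card_mono) auto
  also have "\<dots> \<le> card ?R + card (uminus ` ?R)"
    by (rule card_Un_le)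
  also have "\<dots> \<le> 2 * card ?R"
    using card_image_le[of ?R uminus] by simp
  finally show ?thesis
    by (simp add: card_Diff_singleton)
qed

lemma mult_pcompose_neg_eq_one_minus_monom:
  fixes q :: "'a::finite_field poly"
  assumes "2 * degree q < CARD('a)" and "poly q 0 = 1"
    and "\<And>x. x \<noteq> 0 \<Longrightarrow> poly q x = 0 \<or> poly q (- x) = 0"
  shows "q * pcompose q [:0, - 1:] = 1 - monom 1 (CARD('a) - 1)"
proof (rule poly_eqI_degree[where A = UNIV])
  have "card {0, 1 :: 'a} \<le> CARD('a)"
    by (rule card_mono) auto
  then have card_gt_1: "1 < CARD('a)"
    by simp
  show "degree (q * pcompose q [:0, - 1:]) < card (UNIV :: 'a set)"
    using degree_mult_le[of q "pcompose q [:0, - 1:]"] assms(1) by (simp add: degree_pcompose)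
  have "degree (1 - monom 1 (CARD('a) - 1) :: 'a poly) \<le> CARD('a) - 1"
    by (intro degree_diff_le) (simp_all add: degree_monom_le)
  then show "degree (1 - monom 1 (CARD('a) - 1) :: 'a poly) < card (UNIV :: 'a set)"
    using card_gt_1 by simp
  fix x :: 'a
  show "poly (q * pcompose q [:0, - 1:]) x = poly (1 - monom 1 (CARD('a) - 1)) x"
  proof (cases "x = 0")
    case True
    then show ?thesis
      using assms(2) card_gt_1 by (simp add: poly_pcompose poly_monom)
  next
    case False
    then have "poly q x * poly q (- x) = 0" and "x ^ (CARD('a) - 1) = 1"
      using assms(3) finite_field_power_card_minus_one by auto
    then show ?thesis
      by (simp add: poly_pcompose poly_monom)
  qed
qed

lemma of_nat_fact_mod_ring_neq_0:
  assumes "m < CARD('p::prime_card)"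
  shows "(of_nat (fact m) :: 'p mod_ring) \<noteq> 0"
  using assms prime_card[where 'a='p]
  by (simp add: of_nat_eq_0_iff_char_dvd prime_dvd_fact_iff)

lemma of_nat_mod_ring_neq_0:
  assumes "0 < n" and "n < CARD('p::prime_card)"
  shows "(of_nat n :: 'p mod_ring) \<noteq> 0"
  using assms by (simp add: of_nat_eq_0_iff_char_dvd nat_dvd_not_less)

lemma bpoly_one_eq:
  "(bpoly 1 s :: 'p::prime_card mod_ring poly) = (\<Sum>k<CARD('p).
     smult ((- inverse (of_nat s)) ^ k)
       (pbinom [:- 1, 1:] (CARD('p) - 1 - k) * pbinom [:- 1, of_nat s:] k))"
  by (simp add: bpoly_def Let_def divide_inverse one_pCons)

lemma degree_bpoly_one_less: "degree (bpoly 1 s :: 'p::prime_card mod_ring poly) < CARD('p)"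
proof -
  have "degree (bpoly 1 s :: 'p mod_ring poly) \<le> CARD('p) - 1"
    unfolding bpoly_one_eq
  proof (intro degree_sum_le order.trans[OF degree_smult_le] order.trans[OF degree_mult_le])
    have linear: "degree (pbinom [:a, c:] m) \<le> m" for a c :: "'p mod_ring" and m
      by (rule degree_pbinom_le) simp
    fix k assume "k \<in> {..<CARD('p)}"
    then show "degree (pbinom [:- 1, 1:] (CARD('p) - 1 - k) :: 'p mod_ring poly)
        + degree (pbinom [:- 1, of_nat s:] k :: 'p mod_ring poly) \<le> CARD('p) - 1"
      using linear[of "- 1" 1 "CARD('p) - 1 - k"] linear[of "- 1" "of_nat s" k] by simp
  qed simp
  then show ?thesis
    using prime_gt_1_nat[OF prime_card[where 'a='p]] by linarith
qed

lemma poly_bpoly_one_eq_coeff: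
  fixes x :: "'p::prime_card mod_ring"
  assumes "x - 1 = of_nat M" and "of_nat s * x - 1 = of_nat N"
  shows "poly (bpoly 1 s) x
    = coeff ([:1, - inverse (of_nat s):] ^ N * [:1, 1:] ^ M) (CARD('p) - 1)"
proof -
  let ?p = "CARD('p)" and ?t = "- inverse (of_nat s) :: 'p mod_ring"
  have "poly [:- 1, 1:] x = of_nat M" and "poly [:- 1, of_nat s:] x = of_nat N"
    using assms by (simp_all add: mult.commute)
  then have "poly (bpoly 1 s) x
      = (\<Sum>k<?p. ?t ^ k * (of_nat (M choose (?p - 1 - k)) * of_nat (N choose k)))"
    unfolding bpoly_one_eq poly_sum
    by (intro sum.cong refl) (simp add: poly_pbinom_of_nat of_nat_fact_mod_ring_neq_0)
  also have "\<dots> = (\<Sum>k\<le>?p - 1. of_nat (N choose k) * ?t ^ k * of_nat (M choose (?p - 1 - k)))"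
    using prime_gt_1_nat[OF prime_card[where 'a='p]]
    by (intro sum.cong) (auto simp: mult_ac)
  finally show ?thesis
    by (simp add: coeff_mult coeff_linear_power_binomial)
qed

lemma poly_bpoly_one_eq_0:
  fixes x :: "'p::prime_card mod_ring"
  assumes "x - 1 = of_nat M" and "of_nat s * x - 1 = of_nat N" and "M + N < CARD('p) - 1"
  shows "poly (bpoly 1 s) x = 0"
proof -
  have "degree ([:1, - inverse (of_nat s):] ^ N * [:1, 1:] ^ M :: 'p mod_ring poly) \<le> N + M"
    by (intro order.trans[OF degree_mult_le] add_mono order.trans[OF degree_power_le]) simp_all
  then have "coeff ([:1, - inverse (of_nat s):] ^ N * [:1, 1:] ^ M :: 'p mod_ring poly)
      (CARD('p) - 1) = 0"
    using assms(3) by (intro coeff_eq_0) linarith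
  then show ?thesis
    by (simp only: poly_bpoly_one_eq_coeff[OF assms(1,2)])
qed

lemma bpoly_one_root_or_root_neg:
  fixes x :: "'p::prime_card mod_ring"
  assumes "0 < s" and "s < CARD('p)" and "x \<noteq> 0"
  shows "poly (bpoly 1 s) x = 0 \<or> poly (bpoly 1 s) (- x) = 0"
proof -
  let ?p = "CARD('p)"
  have of_nat_minus_one: "of_nat n - 1 = (of_nat (n - 1) :: 'p mod_ring)" if "0 < n" for n
    using that by (simp add: of_nat_diff)
  have of_nat_neg: "- of_nat n = (of_nat (?p - n) :: 'p mod_ring)" if "n < ?p" for n
    using that by (simp add: of_nat_diff)
  obtain a where a: "a < ?p" "x = of_nat a"
    using surj_of_nat_mod_ring by blast
  obtain v where v: "v < ?p" "of_nat s * x = of_nat v"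
    using surj_of_nat_mod_ring by blast
  have "(of_nat s :: 'p mod_ring) \<noteq> 0"
    using assms by (intro of_nat_mod_ring_neq_0)
  then have "0 < a" and "0 < v"
    using a v assms(3) by (auto intro!: gr0I)
  consider "a + v \<le> ?p" | "?p \<le> a + v"
    by linarith
  then show ?thesis
  proof cases
    case 1
    have "poly (bpoly 1 s) x = 0"
      by (rule poly_bpoly_one_eq_0[where M = "a - 1" and N = "v - 1"])
        (use 1 a v \<open>0 < a\<close> \<open>0 < v\<close> of_nat_minus_one in auto)
    then show ?thesis ..
  next
    case 2
    have "- x = of_nat (?p - a)" and "of_nat s * - x = of_nat (?p - v)"
      using a v of_nat_neg by auto
    then have "poly (bpoly 1 s) (- x) = 0"
      by (intro poly_bpoly_one_eq_0[where M = "?p - a - 1" and N = "?p - v - 1"])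
        (use 2 a v of_nat_minus_one in auto)
    then show ?thesis ..
  qed
qed

lemma poly_bpoly_one_0:
  assumes "odd CARD('p::prime_card)" and "0 < s" and "s + 1 < CARD('p)"
  shows "poly (bpoly 1 s :: 'p mod_ring poly) 0 = 1"
proof -
  let ?p = "CARD('p)" and ?t = "- inverse (of_nat s) :: 'p mod_ring"
  have "poly (bpoly 1 s :: 'p mod_ring poly) 0 = (\<Sum>k<?p. ?t ^ k)"
    unfolding bpoly_one_eq poly_sum
  proof (intro sum.cong refl)
    fix k assume "k \<in> {..<?p}"
    then have "even (?p - 1 - k + k)"
      using assms(1) by simp
    then have "(- 1 :: 'p mod_ring) ^ (?p - 1 - k) * (- 1) ^ k = 1"
      by (simp flip: power_add)
    with \<open>k \<in> {..<?p}\<close> show "poly (smult (?t ^ k)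
        (pbinom [:- 1, 1:] (?p - 1 - k) * pbinom [:- 1, of_nat s:] k)) 0 = ?t ^ k"
      by (simp add: poly_pbinom_minus_one of_nat_fact_mod_ring_neq_0)
  qed
  also have "\<dots> = 1"
  proof -
    have "(of_nat (s + 1) :: 'p mod_ring) \<noteq> 0"
      using assms by (intro of_nat_mod_ring_neq_0) auto
    then have "?t \<noteq> 1"
      by (metis add_eq_0_iff inverse_1 inverse_inverse_eq inverse_minus_eq minus_minus of_nat_1 of_nat_add)
    moreover have "?t ^ ?p = ?t"
      using finite_field_power_card_eq_same[of ?t] by simp
    ultimately show ?thesis
      by (simp add: geometric_sum)
  qed
  finally show ?thesis .
qed

definition bpoly_one_D :: "nat \<Rightarrow> 'a::field poly" where
  "bpoly_one_D s = [:1, 1:] * [:1, - inverse (of_nat s):] ^ s - 1"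

lemma coeff_bpoly_one_D_eq_0:
  assumes "of_nat s \<noteq> (0 :: 'a::field)" and "i < 2"
  shows "coeff (bpoly_one_D s :: 'a poly) i = 0"
  using assms
  by (cases i) (auto simp: bpoly_one_D_def mult_pCons_left coeff_linear_power_binomial less_Suc_eq)

definition bpoly_one_expansion :: "nat \<Rightarrow> 'p::prime_card mod_ring poly" where
  "bpoly_one_expansion s = (\<Sum>m<CARD('p).
     smult (coeff (bpoly_one_D s ^ m * [:1, - inverse (of_nat s):] ^ (s - 1)) (CARD('p) - 1))
       (pbinom [:- 1, 1:] m))"

lemma degree_bpoly_one_expansion_le:
  assumes "(of_nat s :: 'p::prime_card mod_ring) \<noteq> 0"
  shows "degree (bpoly_one_expansion s :: 'p mod_ring poly) \<le> (CARD('p) - 1) div 2"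
  unfolding bpoly_one_expansion_def
proof (rule degree_sum_le, goal_cases)
  case (2 m)
  show ?case
  proof (cases "CARD('p) - 1 < 2 * m")
    case True
    then have "coeff (bpoly_one_D s ^ m * [:1, - inverse (of_nat s):] ^ (s - 1)) (CARD('p) - 1)
        = (0 :: 'p mod_ring)"
      using coeff_bpoly_one_D_eq_0[OF assms] by (intro coeff_power_mult_eq_0[where k = 2]) auto
    then show ?thesis
      by simp
  next
    case False
    have "degree (pbinom [:- 1, 1:] m :: 'p mod_ring poly) \<le> m"
      by (rule degree_pbinom_le) simp
    with False show ?thesis
      using degree_smult_le order.trans by fastforce
  qed
qed simp

lemma poly_bpoly_one_expansion:
  fixes x :: "'p::prime_card mod_ring"
  assumes "x - 1 = of_nat M" and "M < CARD('p)"
  shows "poly (bpoly_one_expansion s) x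
    = coeff ((bpoly_one_D s + 1) ^ M * [:1, - inverse (of_nat s):] ^ (s - 1)) (CARD('p) - 1)"
proof -
  let ?p = "CARD('p)"
  let ?c = "\<lambda>m. coeff (bpoly_one_D s ^ m * [:1, - inverse (of_nat s):] ^ (s - 1) :: 'p mod_ring poly) (?p - 1)"
  have "poly [:- 1, 1:] x = of_nat M"
    using assms(1) by simp
  then have "poly (bpoly_one_expansion s) x = (\<Sum>m<?p. ?c m * of_nat (M choose m))"
    unfolding bpoly_one_expansion_def poly_sum
    by (intro sum.cong refl) (simp add: poly_pbinom_of_nat of_nat_fact_mod_ring_neq_0)
  also have "\<dots> = (\<Sum>m\<le>M. of_nat (M choose m) * ?c m)"
    using assms(2) by (intro sum.mono_neutral_cong_right) (auto simp: binomial_eq_0)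
  also have "\<dots> = coeff ((bpoly_one_D s + 1) ^ M * [:1, - inverse (of_nat s):] ^ (s - 1)) (?p - 1)"
    by (simp add: binomial_ring sum_distrib_right coeff_sum of_nat_poly mult.assoc)
  finally show ?thesis .
qed

lemma bpoly_one_eq_expansion:
  assumes "0 < s" and "s < CARD('p::prime_card)"
  shows "bpoly 1 s = (bpoly_one_expansion s :: 'p mod_ring poly)"
proof (rule poly_eqI_degree[where A = UNIV])
  let ?p = "CARD('p)" and ?T = "[:1, - inverse (of_nat s):] :: 'p mod_ring poly"
  fix x :: "'p mod_ring"
  obtain M where M: "M < ?p" "x - 1 = of_nat M"
    using surj_of_nat_mod_ring by blast
  then have "of_nat s * x - 1 = of_nat (s * M + (s - 1))"
    using assms(1) by (simp add: of_nat_diff algebra_simps eq_diff_eq)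
  then have "poly (bpoly 1 s) x = coeff (?T ^ (s * M + (s - 1)) * [:1, 1:] ^ M) (?p - 1)"
    by (rule poly_bpoly_one_eq_coeff[OF M(2)])
  also have "?T ^ (s * M + (s - 1)) * [:1, 1:] ^ M = (bpoly_one_D s + 1) ^ M * ?T ^ (s - 1)"
    by (simp add: bpoly_one_D_def power_add power_mult_distrib mult_ac
        del: mult_pCons_left flip: power_mult)
  also have "coeff \<dots> (?p - 1) = poly (bpoly_one_expansion s) x"
    by (rule poly_bpoly_one_expansion[OF M(2,1), symmetric])
  finally show "poly (bpoly 1 s) x = poly (bpoly_one_expansion s) x" .
next
  show "degree (bpoly 1 s :: 'p mod_ring poly) < card (UNIV :: 'p mod_ring set)"
    using degree_bpoly_one_less by simp
  have "degree (bpoly_one_expansion s :: 'p mod_ring poly) \<le> (CARD('p) - 1) div 2"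
    using assms by (intro degree_bpoly_one_expansion_le of_nat_mod_ring_neq_0)
  then show "degree (bpoly_one_expansion s :: 'p mod_ring poly) < card (UNIV :: 'p mod_ring set)"
    using prime_gt_1_nat[OF prime_card[where 'a='p]] by simp
qed

theorem lemma11:
  fixes s :: nat
  assumes "odd (CARD('p::prime_card))"
    and "0 < s" and "s < CARD('p) - 1"
  shows "bpoly 1 s * pcompose (bpoly 1 s) [:0, -1:]
           = 1 - monom (1 :: 'p mod_ring) (CARD('p) - 1)
         \<and> degree (bpoly 1 s :: 'p mod_ring poly) = (CARD('p) - 1) div 2
         \<and> (\<exists>c A. c \<noteq> 0 \<and> finite A \<and>
           (bpoly 1 s :: 'p mod_ring poly) = smult c (\<Prod>a\<in>A. [:- a, 1:]))"
proof -
  let ?p = "CARD('p)" and ?b = "bpoly 1 s :: 'p mod_ring poly"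
  let ?R = "{x. poly ?b x = 0}"
  have s: "s < ?p"
    using assms(3) by linarith
  have b0: "poly ?b 0 = 1"
    using assms by (intro poly_bpoly_one_0) auto
  then have "?b \<noteq> 0"
    by auto
  have root_pairs: "\<And>x. x \<noteq> 0 \<Longrightarrow> poly ?b x = 0 \<or> poly ?b (- x) = 0"
    using assms(2) s by (rule bpoly_one_root_or_root_neg)
  have "degree ?b \<le> (?p - 1) div 2"
    using bpoly_one_eq_expansion[OF assms(2) s] degree_bpoly_one_expansion_le
      of_nat_mod_ring_neq_0[OF assms(2) s] by simp
  moreover have "?p - 1 \<le> 2 * card ?R"
    using card_roots_ge_if_root_or_root_neg[of ?b, OF root_pairs] by simp
  moreover have "card ?R \<le> degree ?b"
    using \<open>?b \<noteq> 0\<close> by (rule card_poly_roots_bound)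
  ultimately have deg: "degree ?b = (?p - 1) div 2" and card: "card ?R = degree ?b"
    by linarith+
  have "2 * degree ?b < CARD('p mod_ring)"
    using deg prime_gt_1_nat[OF prime_card[where 'a='p]] by simp
  then have "?b * pcompose ?b [:0, - 1:] = 1 - monom 1 (?p - 1)"
    using mult_pcompose_neg_eq_one_minus_monom[OF _ b0 root_pairs] by simp
  moreover have "?b = smult (lead_coeff ?b) (\<Prod>a\<in>?R. [:- a, 1:])"
    using card \<open>?b \<noteq> 0\<close> by (intro poly_eq_smult_prod_roots poly_roots_finite) auto
  moreover have "lead_coeff ?b \<noteq> 0"
    using \<open>?b \<noteq> 0\<close> by simp
  ultimately show ?thesis
    using deg poly_roots_finite[OF \<open>?b \<noteq> 0\<close>] by blast
qed

end
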